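(* For egalitarian transition structures $\mathcal{T}_1,\mathcal{T}_2$, if $\mathcal{T}_1\equiv\mathcal{T}_2$ (as egalitarian transition structures) then $\mathrm{split}(\mathcal{T}_1)\equiv\mathrm{split}(\mathcal{T}_2)$ (as plain transition structures).
   Context: An atomic egalitarian transition structure is a tuple $(Q,T,\rightarrow,P,g^0)$ where $Q$ (states) and $T$ (transitions) are disjoint sets, ${\rightarrow}\subseteq(Q\times T)\cup(T\times Q)$, $P$ is a set of properties, each a partial function $p:Q\cup T\rightharpoonup C_p$, and $g^0\in Q\cup T$ (elements of $Q\cup T$ are stages). Egalitarian transition structures are defined inductively with their property sets: every atomic one is one, with property set $P$; if $\mathcal{T}_1,\mathcal{T}_2$ are egalitarian with property sets $P_1,P_2$ and $Y\subseteq P_1\times P_2$ with $C_{p_1}=C_{p_2}$ for $(p_1,p_2)\in Y$, then the formal expression $\mathcal{T}_1\|_Y\mathcal{T}_2$ is egalitarian with property set $P_1\uplus P_2$ (distinct structures have disjoint states, transitions, properties). Define $\mathrm{atomic}(\mathcal{T})=\{\mathcal{T}\}$ for atomic $\mathcal{T}$ and $\mathrm{atomic}(\mathcal{T}_1\|_Y\mathcal{T}_2)=\mathrm{atomic}(\mathcal{T}_1)\cup\mathrm{atomic}(\mathcal{T}_2)$; $\mathrm{criteria}(\mathcal{T})=\emptyset$ for atomic $\mathcal{T}$ and $\mathrm{criteria}(\mathcal{T}_1\|_Y\mathcal{T}_2)=\{\{x,y\}\mid\langle x,y\rangle\in Y\}\cup\mathrm{criteria}(\mathcal{T}_1)\cup\mathrm{criteria}(\mathcal{T}_2)$.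 Egalitarian structures are equivalent, $\mathcal{T}_1\equiv\mathcal{T}_2$, iff they have the same atomic components and the same criteria. A plain transition structure is a tuple $(Q,\rightarrow,P,q^0)$ with ${\rightarrow}\subseteq Q\times Q$, properties partial functions $p:Q\rightharpoonup C_p$, $q^0\in Q$. For plain $\mathcal{T}_i=(Q_i,\rightarrow_i,P_i,q_i^0)$ and $Y\subseteq P_1\times P_2$, the plain structure $\mathcal{T}_1\|_Y\mathcal{T}_2$ has states the pairs $\langle q_1,q_2\rangle\in Q_1\times Q_2$ such that for every $(p_1,p_2)\in Y$, $p_1(q_1)$ or $p_2(q_2)$ is undefined or they are equal; $\langle q_1,q_2\rangle\rightarrow\langle q_1',q_2'\rangle$ iff ($q_1\rightarrow_1q_1'$ and $q_2\rightarrow_2q_2'$) or ($q_1\rightarrow_1q_1'$, $q_2=q_2'$) or ($q_1=q_1'$, $q_2\rightarrow_2q_2'$); properties $P_1\uplus P_2$ with $p(\langle q_1,q_2\rangle)=p(q_i)$ for $p\in P_i$; initial state $\langle q_1^0,q_2^0\rangle$ (assumed to be a state). Two plain structures are equivalent, $\mathcal{T}_1\equiv\mathcal{T}_2$, iff there are bijections $f:Q_1\to Q_2$ and $F:P_1\to P_2$ with $q\rightarrow_1q'\Leftrightarrow f(q)\rightarrow_2f(q')$, $C_{p}=C_{F(p)}$, $p(q)=F(p)(f(q))$ for all $q,q'\in Q_1$, $p\in P_1$, and $f(q_1^0)=q_2^0$. Split: for atomic $(Q,T,\rightarrow,P,g^0)$, its split is the plain structure $(Q\cup T,\rightarrow,P,g^0)$;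 $\mathrm{split}(\mathcal{T}_1\|_Y\mathcal{T}_2)=\mathrm{split}(\mathcal{T}_1)\|_Y\mathrm{split}(\mathcal{T}_2)$. *)

theory Defs
  imports Main
begin

(* A property p is the partial function  aval a p : 's => 'v option  with
   codomain  aC a p  (the set C_p). *)
record ('s, 'p, 'v) aets =
  aQ   :: "'s set"
  aT   :: "'s set"
  arel :: "('s \<times> 's) set"
  aP   :: "'p set"
  aval :: "'p \<Rightarrow> 's \<Rightarrow> 'v option"
  aC   :: "'p \<Rightarrow> 'v set"
  ag0  :: 's

definition wf_atomic :: "('s, 'p, 'v) aets \<Rightarrow> bool" where
  "wf_atomic a \<longleftrightarrow>
     aQ a \<inter> aT a = {} \<and>
     arel a \<subseteq> (aQ a \<times> aT a) \<union> (aT a \<times> aQ a) \<and>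
     (\<forall>p \<in> aP a. \<forall>x v. aval a p x = Some v \<longrightarrow> x \<in> aQ a \<union> aT a \<and> v \<in> aC a p) \<and>
     ag0 a \<in> aQ a \<union> aT a"

datatype ('s, 'p, 'v) ets =
    Atom "('s, 'p, 'v) aets"
  | Par "('s, 'p, 'v) ets" "('p \<times> 'p) set" "('s, 'p, 'v) ets"

fun atomic :: "('s, 'p, 'v) ets \<Rightarrow> ('s, 'p, 'v) aets set" where
  "atomic (Atom a) = {a}"
| "atomic (Par T1 Y T2) = atomic T1 \<union> atomic T2"

fun criteria :: "('s, 'p, 'v) ets \<Rightarrow> 'p set set" where
  "criteria (Atom a) = {}"
| "criteria (Par T1 Y T2) = {{x, y} | x y. (x, y) \<in> Y} \<union> criteria T1 \<union> criteria T2"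

fun props :: "('s, 'p, 'v) ets \<Rightarrow> 'p set" where
  "props (Atom a) = aP a"
| "props (Par T1 Y T2) = props T1 \<union> props T2"

fun stages :: "('s, 'p, 'v) ets \<Rightarrow> 's set" where
  "stages (Atom a) = aQ a \<union> aT a"
| "stages (Par T1 Y T2) = stages T1 \<union> stages T2"

fun codom :: "('s, 'p, 'v) ets \<Rightarrow> 'p \<Rightarrow> 'v set" where
  "codom (Atom a) p = aC a p"
| "codom (Par T1 Y T2) p = (if p \<in> props T1 then codom T1 p else codom T2 p)"

(* Well-formedness: the inductive definition of egalitarian transition
   structures, with the standing assumption that distinct components have
   disjoint stages and disjoint property sets (so P1 \<uplus> P2 = P1 \<union> P2). *)
fun wf_ets :: "('s, 'p, 'v) ets \<Rightarrow> bool" where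
  "wf_ets (Atom a) = wf_atomic a"
| "wf_ets (Par T1 Y T2) \<longleftrightarrow>
     wf_ets T1 \<and> wf_ets T2 \<and>
     Y \<subseteq> props T1 \<times> props T2 \<and>
     (\<forall>(p1, p2) \<in> Y. codom T1 p1 = codom T2 p2) \<and>
     stages T1 \<inter> stages T2 = {} \<and>
     props T1 \<inter> props T2 = {}"

definition ets_equiv :: "('s, 'p, 'v) ets \<Rightarrow> ('s, 'p, 'v) ets \<Rightarrow> bool" where
  "ets_equiv T1 T2 \<longleftrightarrow> atomic T1 = atomic T2 \<and> criteria T1 = criteria T2"

(* Plain transition structures; states are trees of stages (nested pairs). *)
datatype 's st = Leaf 's | Node "'s st" "'s st"

record ('s, 'p, 'v) pts =
  pQ   :: "'s st set"
  prel :: "('s st \<times> 's st) set"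
  pP   :: "'p set"
  pval :: "'p \<Rightarrow> 's st \<Rightarrow> 'v option"
  pC   :: "'p \<Rightarrow> 'v set"
  pq0  :: "'s st"

definition pcomp :: "('s, 'p, 'v) pts \<Rightarrow> ('p \<times> 'p) set \<Rightarrow> ('s, 'p, 'v) pts \<Rightarrow> ('s, 'p, 'v) pts" where
  "pcomp T1 Y T2 =
    (let Q = {Node q1 q2 | q1 q2. q1 \<in> pQ T1 \<and> q2 \<in> pQ T2 \<and>
                (\<forall>(p1, p2) \<in> Y. pval T1 p1 q1 = None \<or> pval T2 p2 q2 = None \<or>
                                 pval T1 p1 q1 = pval T2 p2 q2)}
     in \<lparr> pQ = Q,
          prel = {(Node q1 q2, Node q1' q2') | q1 q2 q1' q2'.
                    Node q1 q2 \<in> Q \<and> Node q1' q2' \<in> Q \<and>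
                    (((q1, q1') \<in> prel T1 \<and> (q2, q2') \<in> prel T2) \<or>
                     ((q1, q1') \<in> prel T1 \<and> q2 = q2') \<or>
                     (q1 = q1' \<and> (q2, q2') \<in> prel T2))},
          pP = pP T1 \<union> pP T2,
          pval = (\<lambda>p s. case s of
                     Node q1 q2 \<Rightarrow> (if p \<in> pP T1 then pval T1 p q1
                                    else if p \<in> pP T2 then pval T2 p q2 else None)
                   | Leaf _ \<Rightarrow> None),
          pC = (\<lambda>p. if p \<in> pP T1 then pC T1 p else pC T2 p),
          pq0 = Node (pq0 T1) (pq0 T2) \<rparr>)"

definition pts_equiv :: "('s, 'p, 'v) pts \<Rightarrow> ('s, 'p, 'v) pts \<Rightarrow> bool" where
  "pts_equiv T1 T2 \<longleftrightarrow>
    (\<exists>f F. bij_betw f (pQ T1) (pQ T2) \<and> bij_betw F (pP T1) (pP T2) \<and>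
       (\<forall>q \<in> pQ T1. \<forall>q' \<in> pQ T1. (q, q') \<in> prel T1 \<longleftrightarrow> (f q, f q') \<in> prel T2) \<and>
       (\<forall>p \<in> pP T1. pC T1 p = pC T2 (F p)) \<and>
       (\<forall>q \<in> pQ T1. \<forall>p \<in> pP T1. pval T1 p q = pval T2 (F p) (f q)) \<and>
       f (pq0 T1) = pq0 T2)"

definition split_atomic :: "('s, 'p, 'v) aets \<Rightarrow> ('s, 'p, 'v) pts" where
  "split_atomic a =
     \<lparr> pQ = Leaf ` (aQ a \<union> aT a),
       prel = map_prod Leaf Leaf ` arel a,
       pP = aP a,
       pval = (\<lambda>p s. case s of Leaf x \<Rightarrow> aval a p x | Node _ _ \<Rightarrow> None),
       pC = aC a,
       pq0 = Leaf (ag0 a) \<rparr>"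

fun split :: "('s, 'p, 'v) ets \<Rightarrow> ('s, 'p, 'v) pts" where
  "split (Atom a) = split_atomic a"
| "split (Par T1 Y T2) = pcomp (split T1) Y (split T2)"

end

theory Submission
  imports Defs
begin

(* A state of split T is a tree whose leaves pick exactly one stage from every atomic
   component of T. The leaf set determines the state, and the sets that occur are exactly
   the selections of one stage per atom on which every criterion {p1, p2} is satisfied
   (the two values agree where both are defined); this set of global states depends only
   on atomic T and criteria T. Transitions (every atom stays or steps, at least one steps),
   property values, codomains and the initial state are likewise functions of the leaf set
   and the atoms. For equivalent T1 and T2, matching states by their leaf sets is therefore
   an isomorphism of split T1 and split T2 that is the identity on properties. *)

section \<open>Plain structures identified through state labels\<close>

abbreviation opt_compatible :: "'v option \<Rightarrow> 'v option \<Rightarrow> bool" where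
  "opt_compatible u w \<equiv> u = None \<or> w = None \<or> u = w"

lemma pts_equivI_by_labels:
  fixes l l' :: "'s st \<Rightarrow> 'l"
  assumes inj1: "inj_on l (pQ A)" and inj2: "inj_on l' (pQ B)"
    and same_image: "l ` pQ A = l' ` pQ B"
    and rel: "\<And>q1 q1' q2 q2'. \<lbrakk>q1 \<in> pQ A; q1' \<in> pQ A; q2 \<in> pQ B; q2' \<in> pQ B;
        l q1 = l' q2; l q1' = l' q2'\<rbrakk> \<Longrightarrow> (q1, q1') \<in> prel A \<longleftrightarrow> (q2, q2') \<in> prel B"
    and props: "pP A = pP B"
    and codom: "\<And>p. p \<in> pP A \<Longrightarrow> pC A p = pC B p"
    and val: "\<And>q1 q2 p. \<lbrakk>q1 \<in> pQ A; q2 \<in> pQ B; l q1 = l' q2; p \<in> pP A\<rbrakk> \<Longrightarrow>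
        pval A p q1 = pval B p q2"
    and init: "pq0 A \<in> pQ A \<Longrightarrow> pq0 B \<in> pQ B \<and> l (pq0 A) = l' (pq0 B)"
  shows "pts_equiv A B"
proof -
  \<comment> \<open>The initial stage need not be a state; off \<open>pQ A\<close> the map is free, so send it to \<open>pq0 B\<close>.\<close>
  define f where "f q = (if q \<in> pQ A then the_inv_into (pQ B) l' (l q) else pq0 B)" for q
  have f_match: "f q \<in> pQ B \<and> l' (f q) = l q" if "q \<in> pQ A" for q
  proof -
    have "l q \<in> l' ` pQ B" unfolding same_image[symmetric] using that by (rule imageI)
    then show ?thesis
      using that the_inv_into_into[OF inj2 _ order_refl] f_the_inv_into_f[OF inj2]
      by (simp add: f_def)
  qed
  have "inj_on f (pQ A)"
  proof (rule inj_onI)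
    fix q q' assume q: "q \<in> pQ A" and q': "q' \<in> pQ A" and "f q = f q'"
    then have "l q = l q'" using f_match by metis
    then show "q = q'" using q q' inj1 by (auto dest: inj_onD)
  qed
  moreover have "f ` pQ A = pQ B"
  proof
    show "f ` pQ A \<subseteq> pQ B" using f_match by blast
    show "pQ B \<subseteq> f ` pQ A"
    proof
      fix q2 assume q2: "q2 \<in> pQ B"
      have "l' q2 \<in> l ` pQ A" unfolding same_image using q2 by (rule imageI)
      then obtain q1 where q1: "q1 \<in> pQ A" "l' q2 = l q1" by blast
      then have "l' (f q1) = l' q2" "f q1 \<in> pQ B" using f_match by auto
      then have "f q1 = q2" using q2 inj2 by (simp add: inj_on_eq_iff)
      then show "q2 \<in> f ` pQ A" using q1 by blast
    qed
  qed
  ultimately have "bij_betw f (pQ A) (pQ B)" by (simp add: bij_betw_def)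
  moreover have "f (pq0 A) = pq0 B"
  proof (cases "pq0 A \<in> pQ A")
    case True
    then have "l' (f (pq0 A)) = l' (pq0 B)" "f (pq0 A) \<in> pQ B" "pq0 B \<in> pQ B"
      using init f_match by auto
    then show ?thesis using inj2 by (simp add: inj_on_eq_iff)
  qed (simp add: f_def)
  moreover have "\<forall>q \<in> pQ A. \<forall>q' \<in> pQ A. (q, q') \<in> prel A \<longleftrightarrow> (f q, f q') \<in> prel B"
    using rel f_match by simp
  moreover have "\<forall>q \<in> pQ A. \<forall>p \<in> pP A. pval A p q = pval B (id p) (f q)"
    using val f_match by simp
  ultimately show ?thesis
    unfolding pts_equiv_def using props codom bij_betw_id[of "pP A"] by (intro exI[of _ f] exI[of _ id]) auto
qed

lemma mem_pQ_pcomp: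
  "q \<in> pQ (pcomp A Y B) \<longleftrightarrow> (\<exists>q1 q2. q = Node q1 q2 \<and> q1 \<in> pQ A \<and> q2 \<in> pQ B \<and>
     (\<forall>(p1, p2) \<in> Y. opt_compatible (pval A p1 q1) (pval B p2 q2)))"
  by (auto simp: pcomp_def Let_def)

lemma prel_pcomp:
  "(Node q1 q2, Node q1' q2') \<in> prel (pcomp A Y B) \<longleftrightarrow>
     Node q1 q2 \<in> pQ (pcomp A Y B) \<and> Node q1' q2' \<in> pQ (pcomp A Y B) \<and>
     ((q1, q1') \<in> prel A \<and> (q2, q2') \<in> prel B \<or>
      (q1, q1') \<in> prel A \<and> q2 = q2' \<or>
      q1 = q1' \<and> (q2, q2') \<in> prel B)"
  by (simp add: pcomp_def Let_def)

lemma pval_pcomp_Node: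
  "pval (pcomp A Y B) p (Node q1 q2) =
     (if p \<in> pP A then pval A p q1 else if p \<in> pP B then pval B p q2 else None)"
  by (simp add: pcomp_def Let_def)

lemma pC_pcomp: "pC (pcomp A Y B) p = (if p \<in> pP A then pC A p else pC B p)"
  by (simp add: pcomp_def Let_def)

lemma pq0_pcomp: "pq0 (pcomp A Y B) = Node (pq0 A) (pq0 B)"
  by (simp add: pcomp_def Let_def)

lemma pP_pcomp: "pP (pcomp A Y B) = pP A \<union> pP B"
  by (simp add: pcomp_def Let_def)

section \<open>States of split structures as global states\<close>

fun leaves :: "'s st \<Rightarrow> 's set" where
  "leaves (Leaf x) = {x}"
| "leaves (Node q1 q2) = leaves q1 \<union> leaves q2"

definition atom_stages :: "('s, 'p, 'v) aets \<Rightarrow> 's set" where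
  "atom_stages a = aQ a \<union> aT a"

lemma props_eq_Union_aP: "props T = \<Union>(aP ` atomic T)"
  by (induction T) auto

lemma stages_eq_Union_atom_stages: "stages T = \<Union>(atom_stages ` atomic T)"
  by (induction T) (auto simp: atom_stages_def)

lemma pP_split: "pP (split T) = props T"
  by (induction T) (simp_all add: split_atomic_def pP_pcomp)

lemma leaves_pq0_split: "leaves (pq0 (split T)) = ag0 ` atomic T"
  by (induction T) (simp_all add: split_atomic_def pq0_pcomp image_Un)

lemma leaves_pq0_split_subset_stages: "wf_ets T \<Longrightarrow> leaves (pq0 (split T)) \<subseteq> stages T"
  by (induction T) (auto simp: split_atomic_def pq0_pcomp wf_atomic_def)

lemma leaves_subset_stages: "q \<in> pQ (split T) \<Longrightarrow> leaves q \<subseteq> stages T"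
  by (induction T arbitrary: q) (fastforce simp: split_atomic_def mem_pQ_pcomp)+

lemma mem_props_if_criterion:
  "wf_ets T \<Longrightarrow> {p1, p2} \<in> criteria T \<Longrightarrow> p1 \<in> props T \<and> p2 \<in> props T"
  by (induction T) (auto simp: doubleton_eq_iff)

lemma mem_atomic_Par_iff_props:
  assumes "wf_ets (Par T1 Y T2)" "a \<in> atomic (Par T1 Y T2)" "p \<in> aP a"
  shows "a \<in> atomic T1 \<longleftrightarrow> p \<in> props T1" and "a \<in> atomic T2 \<longleftrightarrow> p \<in> props T2"
  using assms by (auto simp: props_eq_Union_aP)

lemma Int_atom_stages_Par:
  assumes "wf_ets (Par T1 Y T2)" "S1 \<subseteq> stages T1" "S2 \<subseteq> stages T2"
  shows "a \<in> atomic T1 \<Longrightarrow> (S1 \<union> S2) \<inter> atom_stages a = S1 \<inter> atom_stages a"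
    and "a \<in> atomic T2 \<Longrightarrow> (S1 \<union> S2) \<inter> atom_stages a = S2 \<inter> atom_stages a"
  using assms by (auto simp: stages_eq_Union_atom_stages)

definition is_selection :: "('s, 'p, 'v) aets set \<Rightarrow> 's set \<Rightarrow> bool" where
  "is_selection A S \<longleftrightarrow> S \<subseteq> \<Union>(atom_stages ` A) \<and> (\<forall>a \<in> A. \<exists>!x. x \<in> S \<inter> atom_stages a)"

definition values_agree :: "('s, 'p, 'v) aets set \<Rightarrow> 's set \<Rightarrow> 'p \<Rightarrow> 'p \<Rightarrow> bool" where
  "values_agree A S p1 p2 \<longleftrightarrow>
     (\<forall>a1 \<in> A. \<forall>a2 \<in> A. \<forall>x1 \<in> S \<inter> atom_stages a1. \<forall>x2 \<in> S \<inter> atom_stages a2.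
        p1 \<in> aP a1 \<longrightarrow> p2 \<in> aP a2 \<longrightarrow> opt_compatible (aval a1 p1 x1) (aval a2 p2 x2))"

definition global_states :: "('s, 'p, 'v) aets set \<Rightarrow> 'p set set \<Rightarrow> 's set set" where
  "global_states A C =
     {S. is_selection A S \<and> (\<forall>p1 p2. {p1, p2} \<in> C \<longrightarrow> values_agree A S p1 p2)}"

lemma values_agreeD:
  "values_agree A S p1 p2 \<Longrightarrow> a1 \<in> A \<Longrightarrow> a2 \<in> A \<Longrightarrow>
     x1 \<in> S \<inter> atom_stages a1 \<Longrightarrow> x2 \<in> S \<inter> atom_stages a2 \<Longrightarrow> p1 \<in> aP a1 \<Longrightarrow> p2 \<in> aP a2 \<Longrightarrow>
     opt_compatible (aval a1 p1 x1) (aval a2 p2 x2)"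
  unfolding values_agree_def by blast

lemma values_agree_swap:
  assumes "values_agree A S p1 p2"
  shows "values_agree A S p2 p1"
  unfolding values_agree_def
proof (intro ballI impI)
  fix a1 a2 x1 x2
  assume "a1 \<in> A" "a2 \<in> A" "x1 \<in> S \<inter> atom_stages a1" "x2 \<in> S \<inter> atom_stages a2"
    and "p2 \<in> aP a1" "p1 \<in> aP a2"
  then have "opt_compatible (aval a2 p1 x2) (aval a1 p2 x1)"
    using values_agreeD[OF assms] by blast
  then show "opt_compatible (aval a1 p2 x1) (aval a2 p1 x2)" by auto
qed

lemma values_agree_commute: "values_agree A S p1 p2 \<longleftrightarrow> values_agree A S p2 p1"
  by (blast intro: values_agree_swap)

lemma all_criteria_Par_iff:
  assumes sym: "\<And>p1 p2. P p1 p2 \<longleftrightarrow> P p2 p1"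
  shows "(\<forall>p1 p2. {p1, p2} \<in> criteria (Par T1 Y T2) \<longrightarrow> P p1 p2) \<longleftrightarrow>
           (\<forall>(p1, p2) \<in> Y. P p1 p2) \<and>
           (\<forall>p1 p2. {p1, p2} \<in> criteria T1 \<longrightarrow> P p1 p2) \<and>
           (\<forall>p1 p2. {p1, p2} \<in> criteria T2 \<longrightarrow> P p1 p2)"
proof -
  have pairs: "(\<forall>p1 p2. {p1, p2} \<in> {{x, y} | x y. (x, y) \<in> Y} \<longrightarrow> P p1 p2) \<longleftrightarrow>
          (\<forall>(p1, p2) \<in> Y. P p1 p2)"
  proof
    assume on_Y: "\<forall>(p1, p2) \<in> Y. P p1 p2"
    show "\<forall>p1 p2. {p1, p2} \<in> {{x, y} | x y. (x, y) \<in> Y} \<longrightarrow> P p1 p2"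
    proof (intro allI impI)
      fix p1 p2 assume "{p1, p2} \<in> {{x, y} | x y. (x, y) \<in> Y}"
      then obtain x y where "(x, y) \<in> Y" "{x, y} = {p1, p2}" by blast
      then show "P p1 p2" using on_Y sym by (auto simp: doubleton_eq_iff)
    qed
  qed blast
  show ?thesis
    unfolding criteria.simps(2) Un_iff imp_disjL all_conj_distrib pairs conj_assoc ..
qed

lemma is_selection_Par_iff:
  assumes "wf_ets (Par T1 Y T2)" "S1 \<subseteq> stages T1" "S2 \<subseteq> stages T2"
  shows "is_selection (atomic (Par T1 Y T2)) (S1 \<union> S2) \<longleftrightarrow>
           is_selection (atomic T1) S1 \<and> is_selection (atomic T2) S2"
proof -
  have "S1 \<subseteq> \<Union>(atom_stages ` atomic T1)" "S2 \<subseteq> \<Union>(atom_stages ` atomic T2)"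
    using assms(2,3) by (simp_all add: stages_eq_Union_atom_stages)
  then show ?thesis
    unfolding is_selection_def atomic.simps ball_Un
    by (simp add: Int_atom_stages_Par[OF assms] le_supI1 le_supI2 cong: ball_cong)
qed

lemma values_agree_Par_iff:
  assumes "wf_ets (Par T1 Y T2)" "S1 \<subseteq> stages T1" "S2 \<subseteq> stages T2"
  shows "p1 \<in> props T1 \<Longrightarrow> p2 \<in> props T1 \<Longrightarrow>
           values_agree (atomic (Par T1 Y T2)) (S1 \<union> S2) p1 p2 \<longleftrightarrow> values_agree (atomic T1) S1 p1 p2"
    and "p1 \<in> props T2 \<Longrightarrow> p2 \<in> props T2 \<Longrightarrow>
           values_agree (atomic (Par T1 Y T2)) (S1 \<union> S2) p1 p2 \<longleftrightarrow> values_agree (atomic T2) S2 p1 p2"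
proof -
  have not_in_T2: "p \<notin> aP a" if "a \<in> atomic T2" "p \<in> props T1" for a p
    using assms(1) that by (auto simp: props_eq_Union_aP)
  have not_in_T1: "p \<notin> aP a" if "a \<in> atomic T1" "p \<in> props T2" for a p
    using assms(1) that by (auto simp: props_eq_Union_aP)
  show "p1 \<in> props T1 \<Longrightarrow> p2 \<in> props T1 \<Longrightarrow>
      values_agree (atomic (Par T1 Y T2)) (S1 \<union> S2) p1 p2 \<longleftrightarrow> values_agree (atomic T1) S1 p1 p2"
    unfolding values_agree_def atomic.simps ball_Un
    by (simp add: Int_atom_stages_Par[OF assms] not_in_T2 cong: ball_cong)
  show "p1 \<in> props T2 \<Longrightarrow> p2 \<in> props T2 \<Longrightarrow>
      values_agree (atomic (Par T1 Y T2)) (S1 \<union> S2) p1 p2 \<longleftrightarrow> values_agree (atomic T2) S2 p1 p2"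
    unfolding values_agree_def atomic.simps ball_Un
    by (simp add: Int_atom_stages_Par[OF assms] not_in_T1 cong: ball_cong)
qed

lemma global_states_Par_iff:
  assumes wf: "wf_ets (Par T1 Y T2)" and "S1 \<subseteq> stages T1" "S2 \<subseteq> stages T2"
  shows "S1 \<union> S2 \<in> global_states (atomic (Par T1 Y T2)) (criteria (Par T1 Y T2)) \<longleftrightarrow>
           S1 \<in> global_states (atomic T1) (criteria T1) \<and> S2 \<in> global_states (atomic T2) (criteria T2) \<and>
           (\<forall>(p1, p2) \<in> Y. values_agree (atomic (Par T1 Y T2)) (S1 \<union> S2) p1 p2)"
proof -
  let ?agree = "values_agree (atomic (Par T1 Y T2)) (S1 \<union> S2)"
  have "?agree p1 p2 \<longleftrightarrow> values_agree (atomic T1) S1 p1 p2" if "{p1, p2} \<in> criteria T1" for p1 p2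
    using wf mem_props_if_criterion[OF _ that] values_agree_Par_iff(1)[OF assms] by simp
  moreover have "?agree p1 p2 \<longleftrightarrow> values_agree (atomic T2) S2 p1 p2" if "{p1, p2} \<in> criteria T2" for p1 p2
    using wf mem_props_if_criterion[OF _ that] values_agree_Par_iff(2)[OF assms] by simp
  ultimately have "(\<forall>p1 p2. {p1, p2} \<in> criteria T1 \<longrightarrow> ?agree p1 p2) \<longleftrightarrow>
          (\<forall>p1 p2. {p1, p2} \<in> criteria T1 \<longrightarrow> values_agree (atomic T1) S1 p1 p2)"
       "(\<forall>p1 p2. {p1, p2} \<in> criteria T2 \<longrightarrow> ?agree p1 p2) \<longleftrightarrow>
          (\<forall>p1 p2. {p1, p2} \<in> criteria T2 \<longrightarrow> values_agree (atomic T2) S2 p1 p2)"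
    by blast+
  then show ?thesis
    unfolding global_states_def mem_Collect_eq is_selection_Par_iff[OF assms]
      all_criteria_Par_iff[where P = ?agree, OF values_agree_commute]
    by blast
qed

lemma leaves_is_selection:
  "wf_ets T \<Longrightarrow> q \<in> pQ (split T) \<Longrightarrow> is_selection (atomic T) (leaves q)"
proof (induction T arbitrary: q)
  case (Atom a)
  then show ?case by (auto simp: split_atomic_def is_selection_def atom_stages_def)
next
  case (Par T1 Y T2)
  then obtain q1 q2 where q: "q = Node q1 q2" "q1 \<in> pQ (split T1)" "q2 \<in> pQ (split T2)"
    by (auto simp: mem_pQ_pcomp)
  then show ?case
    using Par is_selection_Par_iff[OF Par.prems(1) leaves_subset_stages leaves_subset_stages] by auto
qed

lemma inj_on_leaves_split: "wf_ets T \<Longrightarrow> inj_on leaves (pQ (split T))"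
proof (induction T)
  case (Atom a)
  then show ?case by (auto simp: split_atomic_def inj_on_def)
next
  case (Par T1 Y T2)
  have disjoint: "stages T1 \<inter> stages T2 = {}" and wf: "wf_ets T1" "wf_ets T2"
    using Par.prems by auto
  have parts: "leaves (Node q1 q2) \<inter> stages T1 = leaves q1" "leaves (Node q1 q2) \<inter> stages T2 = leaves q2"
    if "q1 \<in> pQ (split T1)" "q2 \<in> pQ (split T2)" for q1 q2
    using leaves_subset_stages[OF that(1)] leaves_subset_stages[OF that(2)] disjoint by auto
  show ?case
  proof (rule inj_onI)
    fix q q' assume "q \<in> pQ (split (Par T1 Y T2))" "q' \<in> pQ (split (Par T1 Y T2))"
      and same: "leaves q = leaves q'"
    from \<open>q \<in> _\<close> \<open>q' \<in> _\<close> obtain q1 q2 q1' q2' where q: "q = Node q1 q2" "q' = Node q1' q2'"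
      and mem: "q1 \<in> pQ (split T1)" "q2 \<in> pQ (split T2)" "q1' \<in> pQ (split T1)" "q2' \<in> pQ (split T2)"
      by (auto simp: mem_pQ_pcomp)
    have "leaves q1 = leaves q1'" "leaves q2 = leaves q2'"
      using parts[OF mem(1,2)] parts[OF mem(3,4)] same q by metis+
    then show "q = q'"
      using Par.IH wf mem q by (simp add: inj_on_eq_iff)
  qed
qed

lemma pval_split_eq_aval:
  "wf_ets T \<Longrightarrow> q \<in> pQ (split T) \<Longrightarrow> a \<in> atomic T \<Longrightarrow> p \<in> aP a \<Longrightarrow>
     x \<in> leaves q \<inter> atom_stages a \<Longrightarrow> pval (split T) p q = aval a p x"
proof (induction T arbitrary: q)
  case (Atom a)
  then show ?case by (auto simp: split_atomic_def)
next
  case (Par T1 Y T2)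
  then obtain q1 q2 where q: "q = Node q1 q2" "q1 \<in> pQ (split T1)" "q2 \<in> pQ (split T2)"
    by (auto simp: mem_pQ_pcomp)
  note own = mem_atomic_Par_iff_props[OF Par.prems(1,3,4)]
  note restrict = Int_atom_stages_Par[OF Par.prems(1) leaves_subset_stages[OF q(2)] leaves_subset_stages[OF q(3)]]
  show ?case
  proof (cases "a \<in> atomic T1")
    case True
    then show ?thesis using Par own restrict q by (simp add: pval_pcomp_Node pP_split)
  next
    case False
    then have "a \<in> atomic T2" using Par.prems(3) by simp
    then show ?thesis using Par own restrict q False by (simp add: pval_pcomp_Node pP_split)
  qed
qed

lemma pC_split_eq_aC: "wf_ets T \<Longrightarrow> a \<in> atomic T \<Longrightarrow> p \<in> aP a \<Longrightarrow> pC (split T) p = aC a p"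
proof (induction T)
  case (Atom a)
  then show ?case by (simp add: split_atomic_def)
next
  case (Par T1 Y T2)
  then show ?case
    using mem_atomic_Par_iff_props[OF Par.prems] by (auto simp: pC_pcomp pP_split)
qed

lemma values_agree_Par_iff_compatible:
  assumes wf: "wf_ets (Par T1 Y T2)"
    and q1: "q1 \<in> pQ (split T1)" and q2: "q2 \<in> pQ (split T2)"
    and p1: "p1 \<in> props T1" and p2: "p2 \<in> props T2"
  shows "values_agree (atomic (Par T1 Y T2)) (leaves q1 \<union> leaves q2) p1 p2 \<longleftrightarrow>
           opt_compatible (pval (split T1) p1 q1) (pval (split T2) p2 q2)"
proof -
  let ?S = "leaves q1 \<union> leaves q2"
  note restrict = Int_atom_stages_Par[OF wf leaves_subset_stages[OF q1] leaves_subset_stages[OF q2]]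
  have wf_parts: "wf_ets T1" "wf_ets T2" using wf by auto
  have val1: "aval a p1 x = pval (split T1) p1 q1"
    if "a \<in> atomic (Par T1 Y T2)" "p1 \<in> aP a" "x \<in> ?S \<inter> atom_stages a" for a x
  proof -
    have "a \<in> atomic T1" using mem_atomic_Par_iff_props(1)[OF wf that(1,2)] p1 by simp
    then show ?thesis
      using that restrict(1) pval_split_eq_aval[OF wf_parts(1) q1] by simp
  qed
  have val2: "aval a p2 x = pval (split T2) p2 q2"
    if "a \<in> atomic (Par T1 Y T2)" "p2 \<in> aP a" "x \<in> ?S \<inter> atom_stages a" for a x
  proof -
    have "a \<in> atomic T2" using mem_atomic_Par_iff_props(2)[OF wf that(1,2)] p2 by simp
    then show ?thesis
      using that restrict(2) pval_split_eq_aval[OF wf_parts(2) q2] by simp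
  qed
  obtain a1 x1 where a1: "a1 \<in> atomic T1" "p1 \<in> aP a1" "x1 \<in> leaves q1 \<inter> atom_stages a1"
    using p1 leaves_is_selection[OF wf_parts(1) q1]
    by (auto simp: props_eq_Union_aP is_selection_def)
  obtain a2 x2 where a2: "a2 \<in> atomic T2" "p2 \<in> aP a2" "x2 \<in> leaves q2 \<inter> atom_stages a2"
    using p2 leaves_is_selection[OF wf_parts(2) q2]
    by (auto simp: props_eq_Union_aP is_selection_def)
  show ?thesis
  proof
    assume "values_agree (atomic (Par T1 Y T2)) ?S p1 p2"
    then have "opt_compatible (aval a1 p1 x1) (aval a2 p2 x2)"
      by (rule values_agreeD) (use a1 a2 in auto)
    then show "opt_compatible (pval (split T1) p1 q1) (pval (split T2) p2 q2)"
      using val1[of a1 x1] val2[of a2 x2] a1 a2 by auto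
  next
    assume "opt_compatible (pval (split T1) p1 q1) (pval (split T2) p2 q2)"
    then show "values_agree (atomic (Par T1 Y T2)) ?S p1 p2"
      unfolding values_agree_def using val1 val2 by auto
  qed
qed

lemma Node_mem_pQ_split_Par_iff:
  assumes wf: "wf_ets (Par T1 Y T2)" and q1: "q1 \<in> pQ (split T1)" and q2: "q2 \<in> pQ (split T2)"
  shows "Node q1 q2 \<in> pQ (split (Par T1 Y T2)) \<longleftrightarrow>
           (\<forall>(p1, p2) \<in> Y. values_agree (atomic (Par T1 Y T2)) (leaves q1 \<union> leaves q2) p1 p2)"
proof -
  have agree_iff: "values_agree (atomic (Par T1 Y T2)) (leaves q1 \<union> leaves q2) p1 p2 \<longleftrightarrow>
      opt_compatible (pval (split T1) p1 q1) (pval (split T2) p2 q2)" if "(p1, p2) \<in> Y" for p1 p2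
    using that wf by (intro values_agree_Par_iff_compatible[OF wf q1 q2]) auto
  have "Node q1 q2 \<in> pQ (split (Par T1 Y T2)) \<longleftrightarrow>
      (\<forall>(p1, p2) \<in> Y. opt_compatible (pval (split T1) p1 q1) (pval (split T2) p2 q2))"
    using q1 q2 by (simp add: mem_pQ_pcomp)
  also have "\<dots> \<longleftrightarrow> (\<forall>(p1, p2) \<in> Y. values_agree (atomic (Par T1 Y T2)) (leaves q1 \<union> leaves q2) p1 p2)"
    using agree_iff by auto
  finally show ?thesis .
qed

lemma leaves_mem_global_states:
  "wf_ets T \<Longrightarrow> q \<in> pQ (split T) \<Longrightarrow> leaves q \<in> global_states (atomic T) (criteria T)"
proof (induction T arbitrary: q)
  case (Atom a)
  then show ?case by (auto simp: split_atomic_def global_states_def is_selection_def atom_stages_def)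
next
  case (Par T1 Y T2)
  then obtain q1 q2 where q: "q = Node q1 q2" "q1 \<in> pQ (split T1)" "q2 \<in> pQ (split T2)"
    by (auto simp: mem_pQ_pcomp)
  then show ?case
    using Par Node_mem_pQ_split_Par_iff[OF Par.prems(1) q(2,3)]
      global_states_Par_iff[OF Par.prems(1) leaves_subset_stages[OF q(2)] leaves_subset_stages[OF q(3)]]
    by auto
qed

lemma global_states_subset_leaves_image:
  "wf_ets T \<Longrightarrow> S \<in> global_states (atomic T) (criteria T) \<Longrightarrow> S \<in> leaves ` pQ (split T)"
proof (induction T arbitrary: S)
  case (Atom a)
  then obtain x where "x \<in> atom_stages a" "S = {x}"
    by (auto simp: global_states_def is_selection_def)
  then show ?case by (auto simp: split_atomic_def atom_stages_def intro!: image_eqI[where x = "Leaf x"])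
next
  case (Par T1 Y T2)
  have wf_parts: "wf_ets T1" "wf_ets T2" using Par.prems(1) by auto
  define S1 where "S1 = S \<inter> stages T1"
  define S2 where "S2 = S \<inter> stages T2"
  have S: "S = S1 \<union> S2"
    using Par.prems(2)
    by (auto simp: S1_def S2_def global_states_def is_selection_def stages_eq_Union_atom_stages)
  have "S1 \<subseteq> stages T1" "S2 \<subseteq> stages T2" by (simp_all add: S1_def S2_def)
  note S_iff = global_states_Par_iff[OF Par.prems(1) this, folded S]
  obtain q1 where q1: "q1 \<in> pQ (split T1)" "S1 = leaves q1"
    using Par.IH(1)[OF wf_parts(1)] S_iff Par.prems(2) by blast
  obtain q2 where q2: "q2 \<in> pQ (split T2)" "S2 = leaves q2"
    using Par.IH(2)[OF wf_parts(2)] S_iff Par.prems(2) by blast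
  have "Node q1 q2 \<in> pQ (split (Par T1 Y T2))"
    using Node_mem_pQ_split_Par_iff[OF Par.prems(1) q1(1) q2(1)] S_iff Par.prems(2) S q1(2) q2(2)
    by simp
  moreover have "S = leaves (Node q1 q2)" using S q1(2) q2(2) by simp
  ultimately show ?case by (rule rev_image_eqI)
qed

lemma leaves_image_split:
  "wf_ets T \<Longrightarrow> leaves ` pQ (split T) = global_states (atomic T) (criteria T)"
  using leaves_mem_global_states global_states_subset_leaves_image by blast

lemma pq0_mem_pQ_split_iff:
  "wf_ets T \<Longrightarrow> pq0 (split T) \<in> pQ (split T) \<longleftrightarrow> leaves (pq0 (split T)) \<in> global_states (atomic T) (criteria T)"
proof (induction T)
  case (Atom a)
  then show ?case
    by (auto simp: split_atomic_def global_states_def is_selection_def atom_stages_def wf_atomic_def)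
next
  case (Par T1 Y T2)
  let ?q1 = "pq0 (split T1)" and ?q2 = "pq0 (split T2)"
  let ?agree_on_Y = "\<forall>(p1, p2) \<in> Y. values_agree (atomic (Par T1 Y T2)) (leaves ?q1 \<union> leaves ?q2) p1 p2"
  have wf_parts: "wf_ets T1" "wf_ets T2" using Par.prems(1) by auto
  have "pq0 (split (Par T1 Y T2)) \<in> pQ (split (Par T1 Y T2)) \<longleftrightarrow>
      ?q1 \<in> pQ (split T1) \<and> ?q2 \<in> pQ (split T2) \<and> ?agree_on_Y"
  proof
    assume mem: "pq0 (split (Par T1 Y T2)) \<in> pQ (split (Par T1 Y T2))"
    then have "?q1 \<in> pQ (split T1)" "?q2 \<in> pQ (split T2)" by (auto simp: pq0_pcomp mem_pQ_pcomp)
    with mem show "?q1 \<in> pQ (split T1) \<and> ?q2 \<in> pQ (split T2) \<and> ?agree_on_Y"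
      using Node_mem_pQ_split_Par_iff[OF Par.prems(1)] by (simp add: pq0_pcomp)
  next
    assume "?q1 \<in> pQ (split T1) \<and> ?q2 \<in> pQ (split T2) \<and> ?agree_on_Y"
    then show "pq0 (split (Par T1 Y T2)) \<in> pQ (split (Par T1 Y T2))"
      using Node_mem_pQ_split_Par_iff[OF Par.prems(1)] by (simp add: pq0_pcomp)
  qed
  also have "\<dots> \<longleftrightarrow> leaves ?q1 \<union> leaves ?q2 \<in> global_states (atomic (Par T1 Y T2)) (criteria (Par T1 Y T2))"
    using global_states_Par_iff[OF Par.prems(1) leaves_pq0_split_subset_stages leaves_pq0_split_subset_stages]
      Par.IH wf_parts by simp
  finally show ?case by (simp add: pq0_pcomp)
qed

section \<open>Transitions of split structures\<close>

definition all_stay_or_step :: "('s, 'p, 'v) aets set \<Rightarrow> 's set \<Rightarrow> 's set \<Rightarrow> bool" where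
  "all_stay_or_step A S S' \<longleftrightarrow>
     (\<forall>a \<in> A. \<forall>x \<in> S \<inter> atom_stages a. \<forall>x' \<in> S' \<inter> atom_stages a. (x, x') \<in> arel a \<or> x = x')"

definition some_step :: "('s, 'p, 'v) aets set \<Rightarrow> 's set \<Rightarrow> 's set \<Rightarrow> bool" where
  "some_step A S S' \<longleftrightarrow>
     (\<exists>a \<in> A. \<exists>x \<in> S \<inter> atom_stages a. \<exists>x' \<in> S' \<inter> atom_stages a. (x, x') \<in> arel a)"

lemma is_selection_unique:
  "is_selection A S \<Longrightarrow> a \<in> A \<Longrightarrow> x \<in> S \<inter> atom_stages a \<Longrightarrow> y \<in> S \<inter> atom_stages a \<Longrightarrow> x = y"
  unfolding is_selection_def by blast

lemma all_stay_or_step_refl: "is_selection A S \<Longrightarrow> all_stay_or_step A S S"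
  unfolding all_stay_or_step_def using is_selection_unique by metis

lemma eq_if_all_stay_no_step:
  assumes sel: "is_selection A S" "is_selection A S'"
    and stay: "all_stay_or_step A S S'" and no_step: "\<not> some_step A S S'"
  shows "S = S'"
proof -
  have same: "x = x'" if "a \<in> A" "x \<in> S \<inter> atom_stages a" "x' \<in> S' \<inter> atom_stages a" for a x x'
  proof -
    have "(x, x') \<notin> arel a" using no_step that unfolding some_step_def by blast
    moreover have "(x, x') \<in> arel a \<or> x = x'" using stay that unfolding all_stay_or_step_def by blast
    ultimately show ?thesis by blast
  qed
  show ?thesis
  proof (intro equalityI subsetI)
    fix x assume "x \<in> S"
    then obtain a where "a \<in> A" "x \<in> atom_stages a" using sel(1) by (auto simp: is_selection_def)
    moreover then obtain x' where "x' \<in> S' \<inter> atom_stages a" using sel(2) by (auto simp: is_selection_def)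
    ultimately show "x \<in> S'" using same \<open>x \<in> S\<close> by auto
  next
    fix x' assume "x' \<in> S'"
    then obtain a where "a \<in> A" "x' \<in> atom_stages a" using sel(2) by (auto simp: is_selection_def)
    moreover then obtain x where "x \<in> S \<inter> atom_stages a" using sel(1) by (auto simp: is_selection_def)
    ultimately show "x' \<in> S" using same \<open>x' \<in> S'\<close> by auto
  qed
qed

lemma all_stay_or_step_Par_iff:
  assumes "wf_ets (Par T1 Y T2)" "S1 \<subseteq> stages T1" "S2 \<subseteq> stages T2"
    and "S1' \<subseteq> stages T1" "S2' \<subseteq> stages T2"
  shows "all_stay_or_step (atomic (Par T1 Y T2)) (S1 \<union> S2) (S1' \<union> S2') \<longleftrightarrow>
           all_stay_or_step (atomic T1) S1 S1' \<and> all_stay_or_step (atomic T2) S2 S2'"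
  unfolding all_stay_or_step_def atomic.simps ball_Un
  by (simp add: Int_atom_stages_Par[OF assms(1-3)] Int_atom_stages_Par[OF assms(1,4,5)] cong: ball_cong)

lemma some_step_Par_iff:
  assumes "wf_ets (Par T1 Y T2)" "S1 \<subseteq> stages T1" "S2 \<subseteq> stages T2"
    and "S1' \<subseteq> stages T1" "S2' \<subseteq> stages T2"
  shows "some_step (atomic (Par T1 Y T2)) (S1 \<union> S2) (S1' \<union> S2') \<longleftrightarrow>
           some_step (atomic T1) S1 S1' \<or> some_step (atomic T2) S2 S2'"
  unfolding some_step_def atomic.simps bex_Un
  by (simp add: Int_atom_stages_Par[OF assms(1-3)] Int_atom_stages_Par[OF assms(1,4,5)] cong: bex_cong)

lemma prel_split_iff:
  "wf_ets T \<Longrightarrow> q \<in> pQ (split T) \<Longrightarrow> q' \<in> pQ (split T) \<Longrightarrow>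
     (q, q') \<in> prel (split T) \<longleftrightarrow>
       all_stay_or_step (atomic T) (leaves q) (leaves q') \<and> some_step (atomic T) (leaves q) (leaves q')"
proof (induction T arbitrary: q q')
  case (Atom a)
  then show ?case by (auto simp: split_atomic_def all_stay_or_step_def some_step_def atom_stages_def)
next
  case (Par T1 Y T2)
  from Par.prems(2,3) obtain q1 q2 q1' q2' where q: "q = Node q1 q2" "q' = Node q1' q2'"
    and mem: "q1 \<in> pQ (split T1)" "q2 \<in> pQ (split T2)" "q1' \<in> pQ (split T1)" "q2' \<in> pQ (split T2)"
    by (auto simp: mem_pQ_pcomp)
  have wf_parts: "wf_ets T1" "wf_ets T2" using Par.prems(1) by auto
  define U1 where "U1 = all_stay_or_step (atomic T1) (leaves q1) (leaves q1')"
  define U2 where "U2 = all_stay_or_step (atomic T2) (leaves q2) (leaves q2')"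
  define E1 where "E1 = some_step (atomic T1) (leaves q1) (leaves q1')"
  define E2 where "E2 = some_step (atomic T2) (leaves q2) (leaves q2')"
  have step1: "(q1, q1') \<in> prel (split T1) \<longleftrightarrow> U1 \<and> E1"
    using Par.IH(1) wf_parts mem by (simp add: U1_def E1_def)
  have step2: "(q2, q2') \<in> prel (split T2) \<longleftrightarrow> U2 \<and> E2"
    using Par.IH(2) wf_parts mem by (simp add: U2_def E2_def)
  have sel: "is_selection (atomic T1) (leaves q1)" "is_selection (atomic T1) (leaves q1')"
    "is_selection (atomic T2) (leaves q2)" "is_selection (atomic T2) (leaves q2')"
    using leaves_is_selection wf_parts mem by blast+
  have stay1: "q1 = q1' \<Longrightarrow> U1" and stay2: "q2 = q2' \<Longrightarrow> U2"
    using all_stay_or_step_refl sel by (auto simp: U1_def U2_def)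
  have "leaves q1 = leaves q1'" if "U1" "\<not> E1"
    using eq_if_all_stay_no_step[OF sel(1,2)] that by (simp add: U1_def E1_def)
  then have still1: "U1 \<Longrightarrow> \<not> E1 \<Longrightarrow> q1 = q1'"
    using inj_on_leaves_split[OF wf_parts(1)] mem(1,3) by (auto dest: inj_onD)
  have "leaves q2 = leaves q2'" if "U2" "\<not> E2"
    using eq_if_all_stay_no_step[OF sel(3,4)] that by (simp add: U2_def E2_def)
  then have still2: "U2 \<Longrightarrow> \<not> E2 \<Longrightarrow> q2 = q2'"
    using inj_on_leaves_split[OF wf_parts(2)] mem(2,4) by (auto dest: inj_onD)
  have "(q, q') \<in> prel (split (Par T1 Y T2)) \<longleftrightarrow>
          (q1, q1') \<in> prel (split T1) \<and> (q2, q2') \<in> prel (split T2) \<or>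
          (q1, q1') \<in> prel (split T1) \<and> q2 = q2' \<or>
          q1 = q1' \<and> (q2, q2') \<in> prel (split T2)"
    using Par.prems(2,3) q by (simp add: prel_pcomp)
  also have "\<dots> \<longleftrightarrow> U1 \<and> U2 \<and> (E1 \<or> E2)"
    unfolding step1 step2 using stay1 stay2 still1 still2 by blast
  also have "\<dots> \<longleftrightarrow> all_stay_or_step (atomic (Par T1 Y T2)) (leaves q1 \<union> leaves q2) (leaves q1' \<union> leaves q2') \<and>
      some_step (atomic (Par T1 Y T2)) (leaves q1 \<union> leaves q2) (leaves q1' \<union> leaves q2')"
    unfolding U1_def U2_def E1_def E2_def
      all_stay_or_step_Par_iff[OF Par.prems(1) leaves_subset_stages[OF mem(1)] leaves_subset_stages[OF mem(2)]
        leaves_subset_stages[OF mem(3)] leaves_subset_stages[OF mem(4)]]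
      some_step_Par_iff[OF Par.prems(1) leaves_subset_stages[OF mem(1)] leaves_subset_stages[OF mem(2)]
        leaves_subset_stages[OF mem(3)] leaves_subset_stages[OF mem(4)]]
    by blast
  finally show ?case by (simp only: q leaves.simps)
qed

theorem proposition1:
  fixes T1 T2 :: "('s, 'p, 'v) ets"
  assumes "wf_ets T1" and "wf_ets T2" and "ets_equiv T1 T2"
  shows "pts_equiv (split T1) (split T2)"
proof -
  have atoms: "atomic T1 = atomic T2" and crit: "criteria T1 = criteria T2"
    using assms(3) unfolding ets_equiv_def by auto
  have props: "pP (split T1) = pP (split T2)"
    by (simp add: pP_split props_eq_Union_aP atoms)
  have owner: "\<exists>a \<in> atomic T1. p \<in> aP a" if "p \<in> pP (split T1)" for p
    using that by (simp add: pP_split props_eq_Union_aP)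
  show ?thesis
  proof (rule pts_equivI_by_labels[where l = leaves and l' = leaves])
    show "leaves ` pQ (split T1) = leaves ` pQ (split T2)"
      using leaves_image_split assms(1,2) atoms crit by metis
  next
    fix q1 q1' q2 q2'
    assume "q1 \<in> pQ (split T1)" "q1' \<in> pQ (split T1)" "q2 \<in> pQ (split T2)" "q2' \<in> pQ (split T2)"
      and "leaves q1 = leaves q2" "leaves q1' = leaves q2'"
    then show "(q1, q1') \<in> prel (split T1) \<longleftrightarrow> (q2, q2') \<in> prel (split T2)"
      using prel_split_iff assms(1,2) atoms by metis
  next
    fix p assume "p \<in> pP (split T1)"
    then obtain a where "a \<in> atomic T1" "p \<in> aP a" using owner by blast
    then show "pC (split T1) p = pC (split T2) p"
      using pC_split_eq_aC assms(1,2) atoms by metis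
  next
    fix q1 q2 p
    assume q: "q1 \<in> pQ (split T1)" "q2 \<in> pQ (split T2)" "leaves q1 = leaves q2" and "p \<in> pP (split T1)"
    then obtain a where a: "a \<in> atomic T1" "p \<in> aP a" using owner by blast
    then obtain x where "x \<in> leaves q1 \<inter> atom_stages a"
      using leaves_is_selection[OF assms(1) q(1)] by (auto simp: is_selection_def)
    then show "pval (split T1) p q1 = pval (split T2) p q2"
      using pval_split_eq_aval assms(1,2) q a atoms by metis
  next
    assume "pq0 (split T1) \<in> pQ (split T1)"
    then show "pq0 (split T2) \<in> pQ (split T2) \<and> leaves (pq0 (split T1)) = leaves (pq0 (split T2))"
      using pq0_mem_pQ_split_iff assms(1,2) leaves_pq0_split atoms crit by metis
  qed (use inj_on_leaves_split assms props in auto)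
qed

end
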